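(* Let $(U,G,\Gamma)$ be a preuniformizer for an étale category $\mathcal B=(B,\mathbf B)$. Then: (i) For every $x\in U$, the semigroup $\mathrm{Mor}_{\mathcal B}(x,x)$ is isomorphic via $g\mapsto\Gamma(g,x)$ to the subgroup $G_x=\{g\in G\mid g*x=x\}$; in particular $\mathrm{Mor}_{\mathcal B}(x,x)$ is a group, and these groups are isomorphic as $x$ varies in a $G$-orbit. (ii) $|U|=\pi_{\mathcal B}(U)$ is open in $|\mathcal B|$, and the induced map $|\Gamma|:U/G\to|U|$ is a local homeomorphism (quotient topology on $U/G$, subspace topology on $|U|$). (iii) If $\mathcal B$ is a groupoid and $(U,G,\Gamma)$ is a local uniformizer, then $|\Gamma|:U/G\to|U|$ is injective, hence a homeomorphism.
   Context: Fix one of the "étale classes": (a) metrizable spaces with local homeomorphisms; (b) finite-dimensional second countable topological manifolds with local homeomorphisms; (c) finite-dimensional second countable smooth manifolds (possibly with boundary and corners) with local diffeomorphisms; (d) M-polyfolds with local sc-diffeomorphisms; spaces/maps in it are étale spaces/maps. An étale category $\mathcal B=(B,\mathbf B)$ is a topological category whose object and morphism spaces are étale spaces and whose source, target, unit and composition maps are étale; composition $m\circ m'$ is defined when $t(m)=s(m')$ (first $m$ then $m'$). $\mathrm{Mor}_{\mathcal B}(U_1,U_2)=s^{-1}(U_1)\cap t^{-1}(U_2)$. The realization $|\mathcal B|=B/{\sim_{\mathcal B}}$ (equivalence relation generated by existence of morphisms) has the quotient topology and quotient map $\pi_{\mathcal B}$. A preuniformizer $(U,G,\Gamma)$ for $\mathcal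 B$ consists of an open subset $U\subset B$, an étale left action $G\times U\to U$, $(g,y)\mapsto g*y$, of a finite group $G$, and an étale injection $\Gamma:G\times U\to\mathrm{Mor}_{\mathcal B}(U,U)$ such that (a) $s(\Gamma(g,y))=y$, $t(\Gamma(g,y))=g*y$, $\Gamma(hg,y)=\Gamma(g,y)\circ\Gamma(h,g*y)$; (b) $\Gamma(G\times U)$ contains every connected component of $\mathrm{Mor}_{\mathcal B}(U,U)$ containing a morphism $m$ with $s(m)=t(m)$; (c) the induced map $|\Gamma|:U/G\to|\mathcal B|$ is locally injective and $\sup_{p\in|U|}\#\{[x]\in U/G: \pi_{\mathcal B}(x)=p\}<\infty$. If $\mathcal B$ is a groupoid and $\Gamma$ is surjective onto $\mathrm{Mor}_{\mathcal B}(U,U)$, $(U,G,\Gamma)$ is called a local uniformizer. *)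

theory Defs
  imports "HOL-Analysis.Analysis" "HOL-Algebra.Group"
begin

definition local_homeo :: "'a topology \<Rightarrow> 'b topology \<Rightarrow> ('a \<Rightarrow> 'b) \<Rightarrow> bool" where
  "local_homeo X Y f \<longleftrightarrow> f ` topspace X \<subseteq> topspace Y \<and>
     (\<forall>x\<in>topspace X. \<exists>V. openin X V \<and> x \<in> V \<and> openin Y (f ` V) \<and>
        homeomorphic_map (subtopology X V) (subtopology Y (f ` V)) f)"

definition quotient_topology :: "'a topology \<Rightarrow> ('a \<Rightarrow> 'b) \<Rightarrow> 'b topology" where
  "quotient_topology X q =
     topology (\<lambda>S. S \<subseteq> q ` topspace X \<and> openin X {x \<in> topspace X. q x \<in> S})"

lemma istopology_quotient: "istopology (\<lambda>S. S \<subseteq> q ` topspace X \<and> openin X {x \<in> topspace X. q x \<in> S})"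
proof -
  have I: "{x \<in> topspace X. q x \<in> S \<inter> T} = {x \<in> topspace X. q x \<in> S} \<inter> {x \<in> topspace X. q x \<in> T}" for S T
    by auto
  have U: "{x \<in> topspace X. q x \<in> \<Union>K} = (\<Union>S\<in>K. {x \<in> topspace X. q x \<in> S})" for K
    by auto
  show ?thesis
    unfolding istopology_def I U by auto
qed

lemma openin_quotient_topology:
  "openin (quotient_topology X q) S \<longleftrightarrow> S \<subseteq> q ` topspace X \<and> openin X {x \<in> topspace X. q x \<in> S}"
  unfolding quotient_topology_def topology_inverse'[OF istopology_quotient] by (rule refl)

text \<open>An etale category: object space OB, morphism space MB, source s, target t,
  unit e and composition cmp, where cmp m m' (first m, then m') is defined when t m = s m'.\<close>

definition comp_space :: "'m topology \<Rightarrow> ('m \<Rightarrow> 'a) \<Rightarrow> ('m \<Rightarrow> 'a) \<Rightarrow> ('m \<times> 'm) topology" where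
  "comp_space MB s t = subtopology (prod_topology MB MB)
      {(m, m'). m \<in> topspace MB \<and> m' \<in> topspace MB \<and> t m = s m'}"

definition etale_category ::
  "'a topology \<Rightarrow> 'm topology \<Rightarrow> ('m \<Rightarrow> 'a) \<Rightarrow> ('m \<Rightarrow> 'a) \<Rightarrow> ('a \<Rightarrow> 'm) \<Rightarrow> ('m \<Rightarrow> 'm \<Rightarrow> 'm) \<Rightarrow> bool" where
  "etale_category OB MB s t e cmp \<longleftrightarrow>
     metrizable_space OB \<and> metrizable_space MB \<and>
     local_homeo MB OB s \<and> local_homeo MB OB t \<and> local_homeo OB MB e \<and>
     local_homeo (comp_space MB s t) MB (\<lambda>(m, m'). cmp m m') \<and>
     (\<forall>x\<in>topspace OB. s (e x) = x \<and> t (e x) = x) \<and>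
     (\<forall>m\<in>topspace MB. cmp (e (s m)) m = m \<and> cmp m (e (t m)) = m) \<and>
     (\<forall>m\<in>topspace MB. \<forall>m'\<in>topspace MB. t m = s m' \<longrightarrow>
          s (cmp m m') = s m \<and> t (cmp m m') = t m') \<and>
     (\<forall>m\<in>topspace MB. \<forall>m'\<in>topspace MB. \<forall>m''\<in>topspace MB. t m = s m' \<longrightarrow> t m' = s m'' \<longrightarrow>
          cmp (cmp m m') m'' = cmp m (cmp m' m''))"

definition is_groupoid :: "'a topology \<Rightarrow> 'm topology \<Rightarrow> ('m \<Rightarrow> 'a) \<Rightarrow> ('m \<Rightarrow> 'a) \<Rightarrow> ('a \<Rightarrow> 'm) \<Rightarrow> ('m \<Rightarrow> 'm \<Rightarrow> 'm) \<Rightarrow> bool" where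
  "is_groupoid OB MB s t e cmp \<longleftrightarrow>
     (\<forall>m\<in>topspace MB. \<exists>m'\<in>topspace MB. s m' = t m \<and> t m' = s m \<and>
         cmp m m' = e (s m) \<and> cmp m' m = e (t m))"

definition Mor :: "'m topology \<Rightarrow> ('m \<Rightarrow> 'a) \<Rightarrow> ('m \<Rightarrow> 'a) \<Rightarrow> 'a set \<Rightarrow> 'a set \<Rightarrow> 'm set" where
  "Mor MB s t U1 U2 = {m \<in> topspace MB. s m \<in> U1 \<and> t m \<in> U2}"

definition morrel :: "'m topology \<Rightarrow> ('m \<Rightarrow> 'a) \<Rightarrow> ('m \<Rightarrow> 'a) \<Rightarrow> ('a \<times> 'a) set" where
  "morrel MB s t = (let R = {(s m, t m) | m. m \<in> topspace MB} in (R \<union> R\<inverse>)\<^sup>*)"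

definition piB :: "'m topology \<Rightarrow> ('m \<Rightarrow> 'a) \<Rightarrow> ('m \<Rightarrow> 'a) \<Rightarrow> 'a \<Rightarrow> 'a set" where
  "piB MB s t x = morrel MB s t `` {x}"

definition realization :: "'a topology \<Rightarrow> 'm topology \<Rightarrow> ('m \<Rightarrow> 'a) \<Rightarrow> ('m \<Rightarrow> 'a) \<Rightarrow> 'a set topology" where
  "realization OB MB s t = quotient_topology OB (piB MB s t)"

definition orbG :: "('g, 'b) monoid_scheme \<Rightarrow> ('g \<Rightarrow> 'a \<Rightarrow> 'a) \<Rightarrow> 'a \<Rightarrow> 'a set" where
  "orbG G act y = {act g y | g. g \<in> carrier G}"

definition orbit_space :: "'a topology \<Rightarrow> 'a set \<Rightarrow> ('g, 'b) monoid_scheme \<Rightarrow> ('g \<Rightarrow> 'a \<Rightarrow> 'a) \<Rightarrow> 'a set topology" where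
  "orbit_space OB U G act = quotient_topology (subtopology OB U) (orbG G act)"

definition Gamma_bar :: "'m topology \<Rightarrow> ('m \<Rightarrow> 'a) \<Rightarrow> ('m \<Rightarrow> 'a) \<Rightarrow> 'a set \<Rightarrow> 'a set" where
  "Gamma_bar MB s t Q = piB MB s t (SOME y. y \<in> Q)"

definition preuniformizer ::
  "'a topology \<Rightarrow> 'm topology \<Rightarrow> ('m \<Rightarrow> 'a) \<Rightarrow> ('m \<Rightarrow> 'a) \<Rightarrow> ('a \<Rightarrow> 'm) \<Rightarrow> ('m \<Rightarrow> 'm \<Rightarrow> 'm) \<Rightarrow>
   'a set \<Rightarrow> ('g, 'b) monoid_scheme \<Rightarrow> ('g \<Rightarrow> 'a \<Rightarrow> 'a) \<Rightarrow> ('g \<Rightarrow> 'a \<Rightarrow> 'm) \<Rightarrow> bool" where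
  "preuniformizer OB MB s t e cmp U G act \<Gamma> \<longleftrightarrow>
     openin OB U \<and> group G \<and> finite (carrier G) \<and>
     \<comment> \<open>etale left action\<close>
     (\<forall>g\<in>carrier G. \<forall>y\<in>U. act g y \<in> U) \<and>
     (\<forall>y\<in>U. act \<one>\<^bsub>G\<^esub> y = y) \<and>
     (\<forall>g\<in>carrier G. \<forall>h\<in>carrier G. \<forall>y\<in>U. act (h \<otimes>\<^bsub>G\<^esub> g) y = act h (act g y)) \<and>
     local_homeo (prod_topology (discrete_topology (carrier G)) (subtopology OB U)) (subtopology OB U)
        (\<lambda>(g, y). act g y) \<and>
     \<comment> \<open>etale injection Gamma into Mor(U,U)\<close>
     local_homeo (prod_topology (discrete_topology (carrier G)) (subtopology OB U))
        (subtopology MB (Mor MB s t U U)) (\<lambda>(g, y). \<Gamma> g y) \<and>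
     inj_on (\<lambda>(g, y). \<Gamma> g y) (carrier G \<times> U) \<and>
     \<comment> \<open>(a)\<close>
     (\<forall>g\<in>carrier G. \<forall>y\<in>U. s (\<Gamma> g y) = y \<and> t (\<Gamma> g y) = act g y) \<and>
     (\<forall>g\<in>carrier G. \<forall>h\<in>carrier G. \<forall>y\<in>U.
        \<Gamma> (h \<otimes>\<^bsub>G\<^esub> g) y = cmp (\<Gamma> g y) (\<Gamma> h (act g y))) \<and>
     \<comment> \<open>(b)\<close>
     (\<forall>m\<in>Mor MB s t U U. s m = t m \<longrightarrow>
        connected_component_of_set (subtopology MB (Mor MB s t U U)) m
          \<subseteq> (\<lambda>(g, y). \<Gamma> g y) ` (carrier G \<times> U)) \<and>
     \<comment> \<open>(c)\<close>
     (\<forall>Q\<in>topspace (orbit_space OB U G act). \<exists>W. openin (orbit_space OB U G act) W \<and> Q \<in> W \<and>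
        inj_on (Gamma_bar MB s t) W) \<and>
     (\<exists>N::nat. \<forall>p\<in>piB MB s t ` U.
        finite {Q \<in> topspace (orbit_space OB U G act). Gamma_bar MB s t Q = p} \<and>
        card {Q \<in> topspace (orbit_space OB U G act). Gamma_bar MB s t Q = p} \<le> N)"

definition MorGroup :: "'m topology \<Rightarrow> ('m \<Rightarrow> 'a) \<Rightarrow> ('m \<Rightarrow> 'a) \<Rightarrow> ('a \<Rightarrow> 'm) \<Rightarrow> ('m \<Rightarrow> 'm \<Rightarrow> 'm) \<Rightarrow> 'a \<Rightarrow> 'm monoid" where
  "MorGroup MB s t e cmp x = \<lparr>carrier = Mor MB s t {x} {x}, mult = cmp, one = e x\<rparr>"

definition stabilizer :: "('g, 'b) monoid_scheme \<Rightarrow> ('g \<Rightarrow> 'a \<Rightarrow> 'a) \<Rightarrow> 'a \<Rightarrow> 'g set" where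
  "stabilizer G act x = {g \<in> carrier G. act g x = x}"

end

theory Submission
  imports Defs
begin

text \<open>Property (b) of a preuniformizer says that every morphism of \<open>U\<close> from a point to itself has
  the form \<open>\<Gamma>(g, x)\<close>. Together with injectivity of \<open>\<Gamma>\<close> and the cocycle identity (a), this makes
  \<open>g \<mapsto> \<Gamma>(g, x)\<close> a bijection from the stabiliser \<open>G\<^sub>x\<close> onto \<open>Mor(x, x)\<close> which reverses products;
  so \<open>Mor(x, x)\<close> is a group, and conjugation by \<open>\<Gamma>(g, x)\<close> identifies it with \<open>Mor(g*x, g*x)\<close>.
  Since source and target are open maps, the saturation of an open set of objects is open, i.e.
  \<open>\<pi>\<^sub>\<B>\<close> is an open map. Hence \<open>|\<Gamma>|\<close>, which is \<open>\<pi>\<^sub>\<B>\<close> read on orbits, is continuous and open, and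
  by (c) locally injective: a local homeomorphism. For a local uniformizer of a groupoid, points of
  \<open>U\<close> with the same class are joined by a single morphism, which is some \<open>\<Gamma>(g, y)\<close>, so they lie in one
  \<open>G\<close>-orbit.\<close>

lemma local_homeo_image_subset: "local_homeo X Y f \<Longrightarrow> f ` topspace X \<subseteq> topspace Y"
  unfolding local_homeo_def by blast

lemma local_homeo_imp_continuous_map:
  assumes "local_homeo X Y f"
  shows "continuous_map X Y f"
proof (rule pasting_lemma[where I = "{V. openin X V \<and> continuous_map (subtopology X V) Y f}"
      and T = id and f = "\<lambda>_. f"])
  fix x assume "x \<in> topspace X"
  then obtain V where "openin X V" "x \<in> V" "homeomorphic_map (subtopology X V) (subtopology Y (f ` V)) f"
    using assms unfolding local_homeo_def by blast
  then show "\<exists>V. V \<in> {V. openin X V \<and> continuous_map (subtopology X V) Y f} \<and> x \<in> id V \<and> f x = f x"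
    using homeomorphic_imp_continuous_map continuous_map_in_subtopology by fastforce
qed auto

lemma local_homeo_imp_open_map:
  assumes f: "local_homeo X Y f"
  shows "open_map X Y f"
  unfolding open_map_def
proof (intro allI impI)
  fix W assume W: "openin X W"
  show "openin Y (f ` W)"
  proof (subst openin_subopen, intro ballI)
    fix y assume "y \<in> f ` W"
    then obtain x where x: "x \<in> W" "y = f x" by blast
    then obtain V where V: "openin X V" "x \<in> V" "openin Y (f ` V)"
        "homeomorphic_map (subtopology X V) (subtopology Y (f ` V)) f"
      using f openin_subset[OF W] unfolding local_homeo_def by blast
    have "openin (subtopology Y (f ` V)) (f ` (W \<inter> V))"
      using homeomorphic_imp_open_map[OF V(4)] openin_subtopology_Int[OF W]
      unfolding open_map_def by blast
    then have "openin Y (f ` (W \<inter> V))"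
      using V(3) openin_trans_full by blast
    then show "\<exists>T. openin Y T \<and> y \<in> T \<and> T \<subseteq> f ` W"
      using x V(2) by blast
  qed
qed

lemma local_homeo_if_locally_injective:
  assumes cont: "continuous_map X Y f" and opn: "open_map X Y f"
    and inj: "\<And>x. x \<in> topspace X \<Longrightarrow> \<exists>V. openin X V \<and> x \<in> V \<and> inj_on f V"
  shows "local_homeo X Y f"
  unfolding local_homeo_def
proof (intro conjI ballI)
  show "f ` topspace X \<subseteq> topspace Y"
    using continuous_map_image_subset_topspace[OF cont] .
  fix x assume "x \<in> topspace X"
  then obtain V where V: "openin X V" "x \<in> V" "inj_on f V"
    using inj by blast
  have fV: "openin Y (f ` V)"
    using opn V(1) unfolding open_map_def by blast
  have "homeomorphic_map (subtopology X V) (subtopology Y (f ` V)) f"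
  proof (rule bijective_open_imp_homeomorphic_map)
    show "continuous_map (subtopology X V) (subtopology Y (f ` V)) f"
      using openin_subset[OF V(1)]
      by (intro continuous_map_into_subtopology continuous_map_from_subtopology cont) auto
    show "open_map (subtopology X V) (subtopology Y (f ` V)) f"
      using openin_subset[OF V(1)]
      by (intro open_map_into_subtopology open_map_from_subtopology opn V(1)) auto
    show "f ` topspace (subtopology X V) = topspace (subtopology Y (f ` V))"
      using openin_subset[OF V(1)] openin_subset[OF fV] by auto
    show "inj_on f (topspace (subtopology X V))"
      using V(3) by (simp add: inj_on_subset)
  qed
  then show "\<exists>V. openin X V \<and> x \<in> V \<and> openin Y (f ` V) \<and>
      homeomorphic_map (subtopology X V) (subtopology Y (f ` V)) f"
    using V(1,2) fV by blast
qed

lemma quotient_map_quotient_topology: "quotient_map X (quotient_topology X q) q"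
proof -
  have "{x \<in> topspace X. q x \<in> q ` topspace X} = topspace X"
    by blast
  then have "openin (quotient_topology X q) (q ` topspace X)"
    by (simp add: openin_quotient_topology)
  then have "topspace (quotient_topology X q) = q ` topspace X"
    by (meson openin_quotient_topology openin_subset openin_topspace subset_antisym)
  then show ?thesis
    unfolding quotient_map_def by (simp add: openin_quotient_topology)
qed

definition arrow_rel :: "'m topology \<Rightarrow> ('m \<Rightarrow> 'a) \<Rightarrow> ('m \<Rightarrow> 'a) \<Rightarrow> ('a \<times> 'a) set" where
  "arrow_rel MB s t = {(s m, t m) | m. m \<in> topspace MB}"

lemma morrel_eq_rtrancl: "morrel MB s t = (arrow_rel MB s t \<union> (arrow_rel MB s t)\<inverse>)\<^sup>*"
  by (simp add: morrel_def arrow_rel_def Let_def)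

lemma equiv_morrel: "equiv UNIV (morrel MB s t)"
  unfolding morrel_eq_rtrancl
  by (rule equivI) (simp_all add: refl_rtrancl sym_rtrancl[OF sym_Un_converse] trans_rtrancl)

lemma morrel_sym: "(x, y) \<in> morrel MB s t \<longleftrightarrow> (y, x) \<in> morrel MB s t"
proof -
  have "sym (morrel MB s t)"
    unfolding morrel_eq_rtrancl by (simp add: sym_rtrancl sym_Un_converse)
  then show ?thesis
    by (meson symD)
qed

lemma piB_eq_iff: "piB MB s t x = piB MB s t y \<longleftrightarrow> (x, y) \<in> morrel MB s t"
  unfolding piB_def by (rule eq_equiv_class_iff[OF equiv_morrel UNIV_I UNIV_I])

lemma arrow_in_morrel: "m \<in> topspace MB \<Longrightarrow> (s m, t m) \<in> morrel MB s t"
  unfolding morrel_eq_rtrancl arrow_rel_def by blast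

lemma MorGroup_simps [simp]:
  "carrier (MorGroup MB s t e cmp x) = Mor MB s t {x} {x}"
  "m \<otimes>\<^bsub>MorGroup MB s t e cmp x\<^esub> m' = cmp m m'"
  "\<one>\<^bsub>MorGroup MB s t e cmp x\<^esub> = e x"
  by (simp_all add: MorGroup_def)

locale etale_cat =
  fixes OB :: "'a topology" and MB :: "'m topology"
    and s t :: "'m \<Rightarrow> 'a" and e :: "'a \<Rightarrow> 'm" and cmp :: "'m \<Rightarrow> 'm \<Rightarrow> 'm"
  assumes etale_category: "etale_category OB MB s t e cmp"
begin

lemma
  shows local_homeo_source: "local_homeo MB OB s"
    and local_homeo_target: "local_homeo MB OB t"
    and local_homeo_unit: "local_homeo OB MB e"
    and local_homeo_comp: "local_homeo (comp_space MB s t) MB (\<lambda>(m, m'). cmp m m')"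
  using etale_category unfolding etale_category_def by blast+

lemma
  shows source_unit: "x \<in> topspace OB \<Longrightarrow> s (e x) = x"
    and target_unit: "x \<in> topspace OB \<Longrightarrow> t (e x) = x"
    and unit_comp: "m \<in> topspace MB \<Longrightarrow> cmp (e (s m)) m = m"
    and comp_unit: "m \<in> topspace MB \<Longrightarrow> cmp m (e (t m)) = m"
    and source_comp: "\<lbrakk>m \<in> topspace MB; m' \<in> topspace MB; t m = s m'\<rbrakk> \<Longrightarrow> s (cmp m m') = s m"
    and target_comp: "\<lbrakk>m \<in> topspace MB; m' \<in> topspace MB; t m = s m'\<rbrakk> \<Longrightarrow> t (cmp m m') = t m'"
    and comp_assoc: "\<lbrakk>m \<in> topspace MB; m' \<in> topspace MB; m'' \<in> topspace MB; t m = s m'; t m' = s m''\<rbrakk>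
      \<Longrightarrow> cmp (cmp m m') m'' = cmp m (cmp m' m'')"
  using etale_category unfolding etale_category_def by blast+

lemma unit_in: "x \<in> topspace OB \<Longrightarrow> e x \<in> topspace MB"
  using local_homeo_image_subset[OF local_homeo_unit] by blast

lemma comp_in: "\<lbrakk>m \<in> topspace MB; m' \<in> topspace MB; t m = s m'\<rbrakk> \<Longrightarrow> cmp m m' \<in> topspace MB"
  using local_homeo_image_subset[OF local_homeo_comp] by (force simp: comp_space_def)

lemma unit_in_Mor: "x \<in> topspace OB \<Longrightarrow> e x \<in> Mor MB s t {x} {x}"
  by (simp add: Mor_def unit_in source_unit target_unit)

lemma comp_in_Mor:
  "\<lbrakk>m \<in> Mor MB s t {x} {y}; m' \<in> Mor MB s t {y} {z}\<rbrakk> \<Longrightarrow> cmp m m' \<in> Mor MB s t {x} {z}"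
  by (simp add: Mor_def comp_in source_comp target_comp)

lemma comp_assoc_Mor:
  "\<lbrakk>m \<in> Mor MB s t {w} {x}; m' \<in> Mor MB s t {x} {y}; m'' \<in> Mor MB s t {y} {z}\<rbrakk>
    \<Longrightarrow> cmp (cmp m m') m'' = cmp m (cmp m' m'')"
  by (simp add: Mor_def comp_assoc)

lemma unit_comp_Mor: "m \<in> Mor MB s t {x} {y} \<Longrightarrow> cmp (e x) m = m"
  using unit_comp by (auto simp: Mor_def)

lemma comp_unit_Mor: "m \<in> Mor MB s t {x} {y} \<Longrightarrow> cmp m (e y) = m"
  using comp_unit by (auto simp: Mor_def)

lemma group_MorGroupI:
  assumes x: "x \<in> topspace OB"
    and inv: "\<And>m. m \<in> Mor MB s t {x} {x} \<Longrightarrow> \<exists>m'\<in>Mor MB s t {x} {x}. cmp m' m = e x"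
  shows "group (MorGroup MB s t e cmp x)"
proof (rule groupI, unfold MorGroup_simps)
  show "e x \<in> Mor MB s t {x} {x}"
    using unit_in_Mor[OF x] .
qed (simp_all add: inv comp_in_Mor comp_assoc_Mor unit_comp_Mor)

lemma comp_cancel_left:
  assumes a: "a \<in> Mor MB s t {y} {x}" and b: "b \<in> Mor MB s t {x} {y}" and ba: "cmp b a = e x"
    and m: "m \<in> Mor MB s t {x} {z}"
  shows "cmp b (cmp a m) = m"
  using comp_assoc_Mor[OF b a m] by (simp add: ba unit_comp_Mor[OF m])

text \<open>Since \<open>cmp m m'\<close> means ``first \<open>m\<close>, then \<open>m'\<close>'', an arrow \<open>a : y \<rightarrow> x\<close> with inverse
  \<open>b\<close> conjugates \<open>Mor(x, x)\<close> into \<open>Mor(y, y)\<close> by \<open>m \<mapsto> cmp (cmp a m) b\<close>.\<close>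

lemma conjugation_comp:
  assumes a: "a \<in> Mor MB s t {y} {x}" and b: "b \<in> Mor MB s t {x} {y}" and ba: "cmp b a = e x"
    and m: "m \<in> Mor MB s t {x} {x}" and n: "n \<in> Mor MB s t {x} {x}"
  shows "cmp (cmp (cmp a m) b) (cmp (cmp a n) b) = cmp (cmp a (cmp m n)) b"
proof -
  have am: "cmp a m \<in> Mor MB s t {y} {x}" and an: "cmp a n \<in> Mor MB s t {y} {x}"
    using comp_in_Mor a m n by blast+
  have "cmp (cmp (cmp a m) b) (cmp (cmp a n) b) = cmp (cmp a m) (cmp b (cmp (cmp a n) b))"
    using comp_assoc_Mor[OF am b comp_in_Mor[OF an b]] .
  also have "\<dots> = cmp (cmp a m) (cmp (cmp b (cmp a n)) b)"
    by (simp only: comp_assoc_Mor[OF b an b])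
  also have "\<dots> = cmp a (cmp m (cmp n b))"
    by (simp add: comp_cancel_left[OF a b ba n] comp_assoc_Mor[OF a m comp_in_Mor[OF n b]])
  also have "\<dots> = cmp (cmp a (cmp m n)) b"
    by (simp add: comp_assoc_Mor[OF m n b] comp_assoc_Mor[OF a comp_in_Mor[OF m n] b])
  finally show ?thesis .
qed

lemma conjugation_inverse:
  assumes a: "a \<in> Mor MB s t {y} {x}" and b: "b \<in> Mor MB s t {x} {y}" and ba: "cmp b a = e x"
    and m: "m \<in> Mor MB s t {x} {x}"
  shows "cmp (cmp b (cmp (cmp a m) b)) a = m"
proof -
  have am: "cmp a m \<in> Mor MB s t {y} {x}"
    using comp_in_Mor a m by blast
  have "cmp (cmp b (cmp (cmp a m) b)) a = cmp b (cmp (cmp a m) (cmp b a))"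
    by (simp add: comp_assoc_Mor[OF b comp_in_Mor[OF am b] a] comp_assoc_Mor[OF am b a])
  also have "\<dots> = m"
    by (simp add: ba comp_unit_Mor[OF am] comp_cancel_left[OF a b ba m])
  finally show ?thesis .
qed

lemma MorGroup_iso_if_inverse:
  assumes a: "a \<in> Mor MB s t {y} {x}" and b: "b \<in> Mor MB s t {x} {y}"
    and ba: "cmp b a = e x" and ab: "cmp a b = e y"
  shows "MorGroup MB s t e cmp x \<cong> MorGroup MB s t e cmp y"
proof -
  define conj where "conj m = cmp (cmp a m) b" for m
  define conj' where "conj' n = cmp (cmp b n) a" for n
  have conj_in: "conj m \<in> Mor MB s t {y} {y}" if "m \<in> Mor MB s t {x} {x}" for m
    using comp_in_Mor[OF comp_in_Mor[OF a that] b] by (simp add: conj_def)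
  have conj'_in: "conj' n \<in> Mor MB s t {x} {x}" if "n \<in> Mor MB s t {y} {y}" for n
    using comp_in_Mor[OF comp_in_Mor[OF b that] a] by (simp add: conj'_def)
  have "conj \<in> Group.iso (MorGroup MB s t e cmp x) (MorGroup MB s t e cmp y)"
  proof (rule isoI)
    show "conj \<in> hom (MorGroup MB s t e cmp x) (MorGroup MB s t e cmp y)"
    proof (rule homI)
      fix m n assume "m \<in> carrier (MorGroup MB s t e cmp x)" "n \<in> carrier (MorGroup MB s t e cmp x)"
      then show "conj (m \<otimes>\<^bsub>MorGroup MB s t e cmp x\<^esub> n)
          = conj m \<otimes>\<^bsub>MorGroup MB s t e cmp y\<^esub> conj n"
        unfolding conj_def by (simp add: conjugation_comp[OF a b ba])
    qed (simp add: conj_in)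
    show "bij_betw conj (carrier (MorGroup MB s t e cmp x)) (carrier (MorGroup MB s t e cmp y))"
      unfolding MorGroup_simps
    proof (rule bij_betw_byWitness[where f' = conj'])
      show "\<forall>m\<in>Mor MB s t {x} {x}. conj' (conj m) = m"
        unfolding conj_def conj'_def using conjugation_inverse[OF a b ba] by blast
      show "\<forall>n\<in>Mor MB s t {y} {y}. conj (conj' n) = n"
        unfolding conj_def conj'_def using conjugation_inverse[OF b a ab] by blast
    qed (use conj_in conj'_in in blast)+
  qed
  then show ?thesis
    unfolding is_iso_def by blast
qed

lemma openin_arrow_Image:
  assumes "openin OB A"
  shows "openin OB ((arrow_rel MB s t \<union> (arrow_rel MB s t)\<inverse>) `` A)"
proof -
  have "(arrow_rel MB s t \<union> (arrow_rel MB s t)\<inverse>) `` A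
      = t ` {m \<in> topspace MB. s m \<in> A} \<union> s ` {m \<in> topspace MB. t m \<in> A}"
    unfolding arrow_rel_def by blast
  moreover have "openin MB {m \<in> topspace MB. s m \<in> A}" "openin MB {m \<in> topspace MB. t m \<in> A}"
    using assms local_homeo_imp_continuous_map[OF local_homeo_source]
      local_homeo_imp_continuous_map[OF local_homeo_target]
    by (simp_all add: openin_continuous_map_preimage)
  ultimately show ?thesis
    using local_homeo_imp_open_map[OF local_homeo_source]
      local_homeo_imp_open_map[OF local_homeo_target]
    unfolding open_map_def by (simp add: openin_Un)
qed

lemma openin_morrel_Image:
  assumes A: "openin OB A"
  shows "openin OB (morrel MB s t `` A)"
proof -
  let ?R = "arrow_rel MB s t \<union> (arrow_rel MB s t)\<inverse>"
  have "openin OB ((?R ^^ n) `` A)" for n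
  proof (induction n)
    case (Suc n)
    then show ?case
      unfolding relpow.simps(2) relcomp_Image by (rule openin_arrow_Image)
  qed (simp add: A)
  then show ?thesis
    unfolding morrel_eq_rtrancl rtrancl_is_UN_relpow UN_Image by blast
qed

lemma openin_realization_image:
  assumes A: "openin OB A"
  shows "openin (realization OB MB s t) (piB MB s t ` A)"
proof -
  have "piB MB s t x \<in> piB MB s t ` A \<longleftrightarrow> x \<in> morrel MB s t `` A" for x
  proof -
    have "(x, a) \<in> morrel MB s t \<longleftrightarrow> (a, x) \<in> morrel MB s t" for a
      using morrel_sym .
    then show ?thesis
      by (auto simp: image_iff piB_eq_iff)
  qed
  then have "{x \<in> topspace OB. piB MB s t x \<in> piB MB s t ` A} = morrel MB s t `` A"
    using openin_subset[OF openin_morrel_Image[OF A]] by auto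
  then show ?thesis
    using A openin_morrel_Image[OF A] openin_subset[OF A]
    by (auto simp: realization_def openin_quotient_topology)
qed

lemma morrel_imp_arrow:
  assumes gpd: "is_groupoid OB MB s t e cmp" and x: "x \<in> topspace OB"
    and xy: "(x, y) \<in> morrel MB s t"
  shows "\<exists>m\<in>topspace MB. s m = x \<and> t m = y"
  using xy unfolding morrel_eq_rtrancl
proof (induction rule: rtrancl_induct)
  case base
  then show ?case
    using x unit_in source_unit target_unit by blast
next
  case (step y z)
  then obtain m where m: "m \<in> topspace MB" "s m = x" "t m = y"
    by blast
  from step(2) obtain n where n: "n \<in> topspace MB" "s n = y" "t n = z"
    using gpd unfolding arrow_rel_def is_groupoid_def by blast
  show ?case
    using m n by (intro bexI[of _ "cmp m n"]) (simp_all add: source_comp target_comp comp_in)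
qed

end

locale etale_preuniformizer = etale_cat OB MB s t e cmp
  for OB :: "'a topology" and MB :: "'m topology"
    and s t :: "'m \<Rightarrow> 'a" and e :: "'a \<Rightarrow> 'm" and cmp :: "'m \<Rightarrow> 'm \<Rightarrow> 'm" +
  fixes U :: "'a set" and G :: "('g, 'b) monoid_scheme"
    and act :: "'g \<Rightarrow> 'a \<Rightarrow> 'a" and \<Gamma> :: "'g \<Rightarrow> 'a \<Rightarrow> 'm"
  assumes preuniformizer: "preuniformizer OB MB s t e cmp U G act \<Gamma>"
begin

sublocale G: group G
  using preuniformizer unfolding preuniformizer_def by blast

lemma
  shows openin_U: "openin OB U"
    and act_closed: "\<lbrakk>g \<in> carrier G; y \<in> U\<rbrakk> \<Longrightarrow> act g y \<in> U"
    and act_one: "y \<in> U \<Longrightarrow> act \<one>\<^bsub>G\<^esub> y = y"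
    and act_mult: "\<lbrakk>g \<in> carrier G; h \<in> carrier G; y \<in> U\<rbrakk> \<Longrightarrow> act (h \<otimes>\<^bsub>G\<^esub> g) y = act h (act g y)"
    and local_homeo_Gamma: "local_homeo (prod_topology (discrete_topology (carrier G)) (subtopology OB U))
        (subtopology MB (Mor MB s t U U)) (\<lambda>(g, y). \<Gamma> g y)"
    and inj_on_Gamma: "inj_on (\<lambda>(g, y). \<Gamma> g y) (carrier G \<times> U)"
    and source_Gamma: "\<lbrakk>g \<in> carrier G; y \<in> U\<rbrakk> \<Longrightarrow> s (\<Gamma> g y) = y"
    and target_Gamma: "\<lbrakk>g \<in> carrier G; y \<in> U\<rbrakk> \<Longrightarrow> t (\<Gamma> g y) = act g y"
    and Gamma_mult: "\<lbrakk>g \<in> carrier G; h \<in> carrier G; y \<in> U\<rbrakk>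
      \<Longrightarrow> \<Gamma> (h \<otimes>\<^bsub>G\<^esub> g) y = cmp (\<Gamma> g y) (\<Gamma> h (act g y))"
    and isotropy_in_Gamma_image: "\<lbrakk>m \<in> Mor MB s t U U; s m = t m\<rbrakk> \<Longrightarrow>
      connected_component_of_set (subtopology MB (Mor MB s t U U)) m \<subseteq> (\<lambda>(g, y). \<Gamma> g y) ` (carrier G \<times> U)"
    and locally_injective_Gamma_bar: "Q \<in> topspace (orbit_space OB U G act) \<Longrightarrow>
      \<exists>W. openin (orbit_space OB U G act) W \<and> Q \<in> W \<and> inj_on (Gamma_bar MB s t) W"
  using preuniformizer unfolding preuniformizer_def by blast+

lemma U_subset: "U \<subseteq> topspace OB"
  using openin_subset[OF openin_U] .

lemma Gamma_in_Mor:
  assumes g: "g \<in> carrier G" and y: "y \<in> U"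
  shows "\<Gamma> g y \<in> Mor MB s t {y} {act g y}"
proof -
  have "(g, y) \<in> topspace (prod_topology (discrete_topology (carrier G)) (subtopology OB U))"
    using g y U_subset by auto
  then have "\<Gamma> g y \<in> topspace MB"
    using local_homeo_image_subset[OF local_homeo_Gamma] by auto
  then show ?thesis
    using g y by (simp add: Mor_def source_Gamma target_Gamma)
qed

lemma Gamma_eq_iff:
  "\<lbrakk>g \<in> carrier G; h \<in> carrier G; y \<in> U; z \<in> U\<rbrakk> \<Longrightarrow> \<Gamma> g y = \<Gamma> h z \<longleftrightarrow> g = h \<and> y = z"
  using inj_onD[OF inj_on_Gamma, of "(g, y)" "(h, z)"] by auto

lemma isotropy_eq_Gamma:
  assumes m: "m \<in> Mor MB s t U U" and loop: "s m = t m"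
  obtains g y where "g \<in> carrier G" "y \<in> U" "m = \<Gamma> g y"
proof -
  have "m \<in> topspace (subtopology MB (Mor MB s t U U))"
    using m by (simp add: Mor_def)
  then have "m \<in> connected_component_of_set (subtopology MB (Mor MB s t U U)) m"
    by (simp only: mem_Collect_eq connected_component_of_refl)
  then have "m \<in> (\<lambda>(g, y). \<Gamma> g y) ` (carrier G \<times> U)"
    using isotropy_in_Gamma_image[OF m loop] by blast
  then show ?thesis
    using that by fast
qed

lemma act_inv_act:
  assumes g: "g \<in> carrier G" and y: "y \<in> U"
  shows "act (inv\<^bsub>G\<^esub> g) (act g y) = y"
proof -
  have "act (inv\<^bsub>G\<^esub> g) (act g y) = act (inv\<^bsub>G\<^esub> g \<otimes>\<^bsub>G\<^esub> g) y"
    using act_mult[OF g G.inv_closed[OF g] y] by simp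
  then show ?thesis
    using g y by (simp add: act_one)
qed

lemma Gamma_one: assumes x: "x \<in> U" shows "\<Gamma> \<one>\<^bsub>G\<^esub> x = e x"
proof -
  have ex: "e x \<in> Mor MB s t {x} {x}"
    using U_subset x unit_in_Mor by blast
  then obtain k y where k: "k \<in> carrier G" "y \<in> U" "e x = \<Gamma> k y"
    using isotropy_eq_Gamma[of "e x"] x by (auto simp: Mor_def)
  then have "y = x" "act k x = x"
    using ex Gamma_in_Mor[OF k(1,2)] by (auto simp: Mor_def)
  then have "\<Gamma> (k \<otimes>\<^bsub>G\<^esub> k) x = \<Gamma> k x"
    using Gamma_mult[OF k(1) k(1) x] k(3) unit_comp_Mor[OF ex] by simp
  then have "k \<otimes>\<^bsub>G\<^esub> k = k"
    using Gamma_eq_iff k(1) x by simp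
  then have "k = \<one>\<^bsub>G\<^esub>"
    using G.l_cancel_one'[OF k(1) k(1)] by simp
  then show ?thesis
    using k(3) \<open>y = x\<close> by simp
qed

lemma bij_betw_stabilizer_Mor:
  assumes x: "x \<in> U"
  shows "bij_betw (\<lambda>g. \<Gamma> g x) (stabilizer G act x) (Mor MB s t {x} {x})"
proof (rule bij_betw_imageI)
  show "inj_on (\<lambda>g. \<Gamma> g x) (stabilizer G act x)"
    using x by (auto intro: inj_onI simp: stabilizer_def Gamma_eq_iff)
  show "(\<lambda>g. \<Gamma> g x) ` stabilizer G act x = Mor MB s t {x} {x}"
  proof
    show "(\<lambda>g. \<Gamma> g x) ` stabilizer G act x \<subseteq> Mor MB s t {x} {x}"
    proof (clarsimp simp: stabilizer_def)
      fix g assume "g \<in> carrier G" "act g x = x"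
      then show "\<Gamma> g x \<in> Mor MB s t {x} {x}"
        using Gamma_in_Mor[OF _ x, of g] by simp
    qed
    show "Mor MB s t {x} {x} \<subseteq> (\<lambda>g. \<Gamma> g x) ` stabilizer G act x"
    proof
      fix m assume m: "m \<in> Mor MB s t {x} {x}"
      then obtain g y where g: "g \<in> carrier G" "y \<in> U" "m = \<Gamma> g y"
        using isotropy_eq_Gamma[of m] x by (auto simp: Mor_def)
      then have "y = x" "act g x = x"
        using m Gamma_in_Mor[OF g(1,2)] by (auto simp: Mor_def)
      then show "m \<in> (\<lambda>g. \<Gamma> g x) ` stabilizer G act x"
        using g by (auto simp: stabilizer_def)
    qed
  qed
qed

lemma Gamma_stabilizer_mult:
  "\<lbrakk>x \<in> U; g \<in> stabilizer G act x; h \<in> stabilizer G act x\<rbrakk>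
    \<Longrightarrow> \<Gamma> (h \<otimes>\<^bsub>G\<^esub> g) x = cmp (\<Gamma> g x) (\<Gamma> h x)"
  by (auto simp: stabilizer_def Gamma_mult)

lemma group_MorGroup:
  assumes x: "x \<in> U"
  shows "group (MorGroup MB s t e cmp x)"
proof (rule group_MorGroupI)
  show "x \<in> topspace OB"
    using x U_subset by blast
  fix m assume "m \<in> Mor MB s t {x} {x}"
  then obtain k where k: "k \<in> carrier G" "act k x = x" "m = \<Gamma> k x"
    using bij_betw_stabilizer_Mor[OF x] unfolding bij_betw_def stabilizer_def by blast
  have "act (inv\<^bsub>G\<^esub> k) x = x"
    using act_inv_act[OF k(1) x] k(2) by simp
  then have "\<Gamma> (inv\<^bsub>G\<^esub> k) x \<in> Mor MB s t {x} {x}"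
    using Gamma_in_Mor[OF G.inv_closed[OF k(1)] x] by simp
  moreover have "cmp (\<Gamma> (inv\<^bsub>G\<^esub> k) x) m = e x"
    using Gamma_mult[OF G.inv_closed[OF k(1)] k(1) x] \<open>act (inv\<^bsub>G\<^esub> k) x = x\<close> k
    by (simp add: Gamma_one[OF x])
  ultimately show "\<exists>m'\<in>Mor MB s t {x} {x}. cmp m' m = e x"
    by blast
qed

lemma MorGroup_iso_act:
  assumes x: "x \<in> U" and g: "g \<in> carrier G"
  shows "MorGroup MB s t e cmp x \<cong> MorGroup MB s t e cmp (act g x)"
proof (rule MorGroup_iso_if_inverse)
  have gx: "act g x \<in> U"
    using act_closed[OF g x] .
  show "\<Gamma> g x \<in> Mor MB s t {x} {act g x}"
    using Gamma_in_Mor[OF g x] .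
  show "\<Gamma> (inv\<^bsub>G\<^esub> g) (act g x) \<in> Mor MB s t {act g x} {x}"
    using Gamma_in_Mor[OF G.inv_closed[OF g] gx] by (simp add: act_inv_act[OF g x])
  show "cmp (\<Gamma> g x) (\<Gamma> (inv\<^bsub>G\<^esub> g) (act g x)) = e x"
    using Gamma_mult[OF g G.inv_closed[OF g] x] g by (simp add: Gamma_one[OF x])
  show "cmp (\<Gamma> (inv\<^bsub>G\<^esub> g) (act g x)) (\<Gamma> g x) = e (act g x)"
    using Gamma_mult[OF G.inv_closed[OF g] g gx] g by (simp add: act_inv_act[OF g x] Gamma_one[OF gx])
qed

lemma orbG_act:
  assumes g: "g \<in> carrier G" and y: "y \<in> U"
  shows "orbG G act (act g y) = orbG G act y"
proof
  have "act h (act g y) = act (h \<otimes>\<^bsub>G\<^esub> g) y" if h: "h \<in> carrier G" for h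
    using act_mult[OF g h y] by simp
  then show "orbG G act (act g y) \<subseteq> orbG G act y"
    using g unfolding orbG_def by blast
  have "act h y = act (h \<otimes>\<^bsub>G\<^esub> inv\<^bsub>G\<^esub> g) (act g y)" if h: "h \<in> carrier G" for h
    using act_mult[OF G.inv_closed[OF g] h act_closed[OF g y]] by (simp add: act_inv_act[OF g y])
  then show "orbG G act y \<subseteq> orbG G act (act g y)"
    using g unfolding orbG_def by blast
qed

lemma piB_act: "\<lbrakk>g \<in> carrier G; y \<in> U\<rbrakk> \<Longrightarrow> piB MB s t (act g y) = piB MB s t y"
  using arrow_in_morrel[of "\<Gamma> g y" MB s t] Gamma_in_Mor[of g y]
  by (auto simp: Mor_def piB_eq_iff morrel_sym[of "act g y"])

lemma Gamma_bar_orbG: assumes y: "y \<in> U" shows "Gamma_bar MB s t (orbG G act y) = piB MB s t y"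
proof -
  have "y \<in> orbG G act y"
    using act_one[OF y] unfolding orbG_def by force
  then have "(SOME z. z \<in> orbG G act y) \<in> orbG G act y"
    by (rule someI)
  then show ?thesis
    unfolding Gamma_bar_def orbG_def using piB_act y by auto
qed

abbreviation orbits_U :: "'a set topology" where
  "orbits_U \<equiv> orbit_space OB U G act"

abbreviation realization_U :: "'a set topology" where
  "realization_U \<equiv> subtopology (realization OB MB s t) (piB MB s t ` U)"

lemma quotient_map_orbG: "quotient_map (subtopology OB U) orbits_U (orbG G act)"
  unfolding orbit_space_def by (rule quotient_map_quotient_topology)

lemma topspace_orbits_U: "topspace orbits_U = orbG G act ` U"
proof -
  have "topspace OB \<inter> U = U"
    using U_subset by blast
  then show ?thesis
    using quotient_imp_surjective_map[OF quotient_map_orbG] by simp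
qed

lemma topspace_realization_U: "topspace realization_U = piB MB s t ` U"
proof -
  have "piB MB s t ` U \<subseteq> topspace (realization OB MB s t)"
    using quotient_imp_surjective_map[OF quotient_map_quotient_topology[of OB "piB MB s t"]] U_subset
    unfolding realization_def by blast
  then show ?thesis
    unfolding topspace_subtopology by (rule Int_absorb1)
qed

lemma Gamma_bar_image: "Gamma_bar MB s t ` topspace orbits_U = topspace realization_U"
  unfolding topspace_orbits_U topspace_realization_U image_image
  by (rule image_cong[OF refl Gamma_bar_orbG])

lemma continuous_map_Gamma_bar: "continuous_map orbits_U realization_U (Gamma_bar MB s t)"
proof (rule continuous_compose_quotient_map[OF quotient_map_orbG])
  have "continuous_map (subtopology OB U) realization_U (piB MB s t)"
    using quotient_imp_continuous_map[OF quotient_map_quotient_topology[of OB "piB MB s t"]]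
    by (auto simp: realization_def intro: continuous_map_into_subtopology continuous_map_from_subtopology)
  then show "continuous_map (subtopology OB U) realization_U (Gamma_bar MB s t \<circ> orbG G act)"
    by (rule continuous_map_eq) (simp add: Gamma_bar_orbG)
qed

lemma open_map_Gamma_bar: "open_map orbits_U realization_U (Gamma_bar MB s t)"
  unfolding open_map_def
proof (intro allI impI)
  fix W assume W: "openin orbits_U W"
  define V where "V = {y \<in> topspace (subtopology OB U). orbG G act y \<in> W}"
  have "openin (subtopology OB U) V"
    using W quotient_map_orbG unfolding V_def quotient_map_def by (meson openin_subset)
  then have V: "openin OB V" "V \<subseteq> U"
    using openin_trans_full[OF _ openin_U] unfolding V_def by auto
  have "W = orbG G act ` V"
    using openin_subset[OF W] unfolding V_def topspace_orbits_U using U_subset by auto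
  then have "Gamma_bar MB s t ` W = piB MB s t ` V"
    using V(2) by (auto simp: image_image Gamma_bar_orbG subsetD cong: image_cong)
  moreover have "openin (realization OB MB s t) (piB MB s t ` V)"
    using openin_realization_image[OF V(1)] .
  moreover have "piB MB s t ` V \<inter> piB MB s t ` U = piB MB s t ` V"
    using V(2) by blast
  ultimately show "openin realization_U (Gamma_bar MB s t ` W)"
    by (metis openin_subtopology_Int)
qed

lemma local_homeo_Gamma_bar: "local_homeo orbits_U realization_U (Gamma_bar MB s t)"
  by (rule local_homeo_if_locally_injective[OF continuous_map_Gamma_bar open_map_Gamma_bar
        locally_injective_Gamma_bar])

lemma inj_on_Gamma_bar:
  assumes gpd: "is_groupoid OB MB s t e cmp"
    and onto: "(\<lambda>(g, y). \<Gamma> g y) ` (carrier G \<times> U) = Mor MB s t U U"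
  shows "inj_on (Gamma_bar MB s t) (topspace orbits_U)"
proof (rule inj_onI)
  fix Q1 Q2 assume "Q1 \<in> topspace orbits_U" "Q2 \<in> topspace orbits_U"
    and eq: "Gamma_bar MB s t Q1 = Gamma_bar MB s t Q2"
  then obtain y1 y2 where y: "y1 \<in> U" "y2 \<in> U" "Q1 = orbG G act y1" "Q2 = orbG G act y2"
    by (auto simp: topspace_orbits_U)
  then have "(y1, y2) \<in> morrel MB s t"
    using eq by (simp add: Gamma_bar_orbG piB_eq_iff)
  then obtain m where m: "m \<in> topspace MB" "s m = y1" "t m = y2"
    using morrel_imp_arrow[OF gpd] y(1) U_subset by blast
  then have "m \<in> (\<lambda>(g, y). \<Gamma> g y) ` (carrier G \<times> U)"
    using y by (simp add: onto Mor_def)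
  then obtain g where "g \<in> carrier G" "y2 = act g y1"
    using m source_Gamma target_Gamma by auto
  then show "Q1 = Q2"
    using orbG_act y by simp
qed

lemma homeomorphic_map_Gamma_bar:
  assumes "is_groupoid OB MB s t e cmp"
    and "(\<lambda>(g, y). \<Gamma> g y) ` (carrier G \<times> U) = Mor MB s t U U"
  shows "homeomorphic_map orbits_U realization_U (Gamma_bar MB s t)"
  using bijective_open_imp_homeomorphic_map[OF continuous_map_Gamma_bar open_map_Gamma_bar
      Gamma_bar_image inj_on_Gamma_bar[OF assms]] .

end

theorem mainTheorem3:
  fixes OB :: "'a topology" and MB :: "'m topology"
    and s t :: "'m \<Rightarrow> 'a" and e :: "'a \<Rightarrow> 'm" and cmp :: "'m \<Rightarrow> 'm \<Rightarrow> 'm"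
    and U :: "'a set" and G :: "('g, 'b) monoid_scheme"
    and act :: "'g \<Rightarrow> 'a \<Rightarrow> 'a" and \<Gamma> :: "'g \<Rightarrow> 'a \<Rightarrow> 'm"
  assumes cat: "etale_category OB MB s t e cmp"
    and pre: "preuniformizer OB MB s t e cmp U G act \<Gamma>"
  shows
    "(\<forall>x\<in>U.
        bij_betw (\<lambda>g. \<Gamma> g x) (stabilizer G act x) (Mor MB s t {x} {x}) \<and>
        (\<forall>g\<in>stabilizer G act x. \<forall>h\<in>stabilizer G act x.
            \<Gamma> (h \<otimes>\<^bsub>G\<^esub> g) x = cmp (\<Gamma> g x) (\<Gamma> h x)) \<and>
        group (MorGroup MB s t e cmp x) \<and>
        (\<forall>g\<in>carrier G. MorGroup MB s t e cmp x \<cong> MorGroup MB s t e cmp (act g x)))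
   \<and> openin (realization OB MB s t) (piB MB s t ` U)
   \<and> local_homeo (orbit_space OB U G act)
        (subtopology (realization OB MB s t) (piB MB s t ` U)) (Gamma_bar MB s t)
   \<and> (is_groupoid OB MB s t e cmp \<and> (\<lambda>(g, y). \<Gamma> g y) ` (carrier G \<times> U) = Mor MB s t U U \<longrightarrow>
        inj_on (Gamma_bar MB s t) (topspace (orbit_space OB U G act)) \<and>
        homeomorphic_map (orbit_space OB U G act)
          (subtopology (realization OB MB s t) (piB MB s t ` U)) (Gamma_bar MB s t))"
proof -
  interpret etale_preuniformizer OB MB s t e cmp U G act \<Gamma>
    using cat pre by unfold_locales
  show ?thesis
    using bij_betw_stabilizer_Mor Gamma_stabilizer_mult group_MorGroup MorGroup_iso_act
      openin_realization_image[OF openin_U] local_homeo_Gamma_bar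
      inj_on_Gamma_bar homeomorphic_map_Gamma_bar
    by blast
qed
end
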